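(* Let $m,n,r$ be positive integers. There exists an edge coloring of $\Gamma_{m,n}$ with $r$ colors containing no alternating rectangle if and only if there are edge colorings $c_1,\dots,c_m$ of the complete graph $K_n$, each with $r$ colors, such that $\chi(\mathcal{G}(c_i,c_j))\le r$ for all pairs of indices $i,j$.
   Context: The grid graph $\Gamma_{m,n}$ is the graph on vertex set $[m]\times[n]$ in which distinct vertices $(i,j),(i',j')$ are adjacent iff $i=i'$ or $j=j'$. A rectangle is the induced subgraph on $\{(i,j),(i',j),(i,j'),(i',j')\}$ with $i<i'$, $j<j'$; in an edge coloring it is alternating if $\{(i,j),(i',j)\}$ and $\{(i,j'),(i',j')\}$ have the same color and $\{(i,j),(i,j')\}$ and $\{(i',j),(i',j')\}$ have the same color. For two edge colorings $c_1,c_2$ of $K_n$, $\mathcal{G}(c_1,c_2)$ is the spanning subgraph of $K_n$ consisting of the edges $e$ with $c_1(e)=c_2(e)$; $\chi$ denotes chromatic number. *)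

theory Defs
  imports Main
begin

text \<open>Vertices of the grid graph are pairs (i,j) with i < m, j < n (0-based [m] x [n]).
  Edges are represented as two-element sets of vertices.\<close>

definition grid_edges :: "nat \<Rightarrow> nat \<Rightarrow> (nat \<times> nat) set set" where
  "grid_edges m n = {{u, v} | u v. u \<in> {0..<m} \<times> {0..<n} \<and> v \<in> {0..<m} \<times> {0..<n}
       \<and> u \<noteq> v \<and> (fst u = fst v \<or> snd u = snd v)}"

definition edge_coloring :: "'v set set \<Rightarrow> nat \<Rightarrow> ('v set \<Rightarrow> nat) \<Rightarrow> bool" where
  "edge_coloring E r c \<longleftrightarrow> (\<forall>e\<in>E. c e < r)"

definition alternating_rectangle ::
    "((nat \<times> nat) set \<Rightarrow> nat) \<Rightarrow> nat \<Rightarrow> nat \<Rightarrow> nat \<Rightarrow> nat \<Rightarrow> bool" where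
  "alternating_rectangle c i i' j j' \<longleftrightarrow>
     c {(i, j), (i', j)} = c {(i, j'), (i', j')} \<and>
     c {(i, j), (i, j')} = c {(i', j), (i', j')}"

definition complete_edges :: "nat \<Rightarrow> nat set set" where
  "complete_edges n = {{x, y} | x y. x < n \<and> y < n \<and> x \<noteq> y}"

definition agreement_edges :: "(nat set \<Rightarrow> nat) \<Rightarrow> (nat set \<Rightarrow> nat) \<Rightarrow> nat \<Rightarrow> nat set set" where
  "agreement_edges c1 c2 n = {e \<in> complete_edges n. c1 e = c2 e}"

definition colorable :: "'v set \<Rightarrow> 'v set set \<Rightarrow> nat \<Rightarrow> bool" where
  "colorable V E k \<longleftrightarrow> (\<exists>f. (\<forall>v\<in>V. f v < k) \<and>
       (\<forall>e\<in>E. \<forall>u\<in>e. \<forall>v\<in>e. u \<noteq> v \<longrightarrow> f u \<noteq> f v))"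

definition chromatic_number :: "'v set \<Rightarrow> 'v set set \<Rightarrow> nat" where
  "chromatic_number V E = (LEAST k. colorable V E k)"

end

theory Submission
  imports Defs
begin

text \<open>A grid coloring \<open>c\<close> is read row by row: row \<open>i\<close> carries the coloring \<open>row_coloring c i\<close>
  of \<open>K_n\<close>, and the vertical edges between rows \<open>i\<close> and \<open>i'\<close> give a vertex coloring
  \<open>column_coloring c i i'\<close> of \<open>K_n\<close>. A rectangle on rows \<open>i, i'\<close> and columns \<open>j, j'\<close> is
  alternating exactly when \<open>{j, j'}\<close> is an edge of \<open>\<G>(row_coloring c i, row_coloring c i')\<close>
  whose endpoints get the same column color. So \<open>c\<close> has no alternating rectangle iff every
  column coloring is a proper \<open>r\<close>-coloring of the corresponding agreement graph; conversely,
  row colorings together with proper colorings of their agreement graphs assemble into a grid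
  coloring.\<close>

definition proper_coloring :: "'v set set \<Rightarrow> ('v \<Rightarrow> nat) \<Rightarrow> bool" where
  "proper_coloring E f \<longleftrightarrow> (\<forall>e\<in>E. \<forall>u\<in>e. \<forall>v\<in>e. u \<noteq> v \<longrightarrow> f u \<noteq> f v)"

lemma colorable_iff_proper_coloring:
  "colorable V E k \<longleftrightarrow> (\<exists>f. (\<forall>v\<in>V. f v < k) \<and> proper_coloring E f)"
  unfolding colorable_def proper_coloring_def ..

lemma colorable_mono: "colorable V E k \<Longrightarrow> k \<le> k' \<Longrightarrow> colorable V E k'"
  unfolding colorable_def by (meson order_less_le_trans)

lemma chromatic_number_le_iff_colorable:
  assumes "colorable V E k"
  shows "chromatic_number V E \<le> r \<longleftrightarrow> colorable V E r"
proof
  assume "chromatic_number V E \<le> r"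
  moreover have "colorable V E (chromatic_number V E)"
    unfolding chromatic_number_def using assms by (rule LeastI)
  ultimately show "colorable V E r" using colorable_mono by blast
next
  assume "colorable V E r"
  then show "chromatic_number V E \<le> r"
    unfolding chromatic_number_def by (rule Least_le)
qed

lemma colorable_agreement_edges: "colorable {0..<n} (agreement_edges a b n) n"
  unfolding colorable_def agreement_edges_def complete_edges_def
  by (rule exI[of _ id]) auto

lemma chromatic_number_agreement_edges_le_iff:
  "chromatic_number {0..<n} (agreement_edges a b n) \<le> r \<longleftrightarrow>
     colorable {0..<n} (agreement_edges a b n) r"
  using colorable_agreement_edges by (rule chromatic_number_le_iff_colorable)

lemma proper_coloring_agreement_edges_iff:
  "proper_coloring (agreement_edges a b n) f \<longleftrightarrow>
     (\<forall>j j'. j < j' \<longrightarrow> j' < n \<longrightarrow> a {j, j'} = b {j, j'} \<longrightarrow> f j \<noteq> f j')"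
proof
  assume proper: "proper_coloring (agreement_edges a b n) f"
  show "\<forall>j j'. j < j' \<longrightarrow> j' < n \<longrightarrow> a {j, j'} = b {j, j'} \<longrightarrow> f j \<noteq> f j'"
  proof (intro allI impI)
    fix j j' :: nat assume "j < j'" "j' < n" "a {j, j'} = b {j, j'}"
    then have "{j, j'} \<in> agreement_edges a b n"
      unfolding agreement_edges_def complete_edges_def by fastforce
    from bspec[OF proper[unfolded proper_coloring_def] this] \<open>j < j'\<close>
    show "f j \<noteq> f j'" by simp
  qed
next
  assume proper: "\<forall>j j'. j < j' \<longrightarrow> j' < n \<longrightarrow> a {j, j'} = b {j, j'} \<longrightarrow> f j \<noteq> f j'"
  show "proper_coloring (agreement_edges a b n) f"
    unfolding proper_coloring_def
  proof (intro ballI impI)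
    fix e u v assume e: "e \<in> agreement_edges a b n" and "u \<in> e" "v \<in> e" "u \<noteq> v"
    from e obtain x y where "e = {x, y}" "x < n" "y < n" "a e = b e"
      unfolding agreement_edges_def complete_edges_def by blast
    with \<open>u \<in> e\<close> \<open>v \<in> e\<close> \<open>u \<noteq> v\<close> have uv: "e = {u, v}" "u < n" "v < n" "a {u, v} = b {u, v}"
      by (auto simp: insert_commute)
    show "f u \<noteq> f v"
    proof (cases "u < v")
      case True
      then show ?thesis using proper[rule_format, of u v] uv by simp
    next
      case False
      then have "v < u" using \<open>u \<noteq> v\<close> by simp
      then show ?thesis using proper[rule_format, of v u] uv by (simp add: insert_commute)
    qed
  qed
qed

lemma grid_edges_row: "i < m \<Longrightarrow> {j, j'} \<in> complete_edges n \<Longrightarrow> {(i, j), (i, j')} \<in> grid_edges m n"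
  unfolding grid_edges_def complete_edges_def by (auto simp: doubleton_eq_iff)

lemma grid_edges_column:
  "i < m \<Longrightarrow> i' < m \<Longrightarrow> i \<noteq> i' \<Longrightarrow> j < n \<Longrightarrow> {(i, j), (i', j)} \<in> grid_edges m n"
  unfolding grid_edges_def by force

lemma grid_edgesE:
  assumes "e \<in> grid_edges m n"
  obtains (row) i j j' where "i < m" "{j, j'} \<in> complete_edges n" "e = {(i, j), (i, j')}"
    | (column) i i' j where "i < i'" "i' < m" "j < n" "e = {(i, j), (i', j)}"
proof -
  from assms obtain a b a' b' where
    ab: "a < m" "b < n" "a' < m" "b' < n" "(a, b) \<noteq> (a', b')" "a = a' \<or> b = b'"
    and e: "e = {(a, b), (a', b')}"
    unfolding grid_edges_def by auto
  consider "a = a'" | "a < a'" | "a' < a" by linarith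
  then show thesis
  proof cases
    case 1
    then show thesis using ab e by (intro row[of a b b']) (auto simp: complete_edges_def)
  next
    case 2
    then show thesis using ab e by (intro column[of a a' b]) auto
  next
    case 3
    then show thesis using ab e by (intro column[of a' a b]) (auto simp: insert_commute)
  qed
qed

definition row_coloring :: "((nat \<times> nat) set \<Rightarrow> nat) \<Rightarrow> nat \<Rightarrow> nat set \<Rightarrow> nat" where
  "row_coloring c i e = c ((\<lambda>j. (i, j)) ` e)"

definition column_coloring :: "((nat \<times> nat) set \<Rightarrow> nat) \<Rightarrow> nat \<Rightarrow> nat \<Rightarrow> nat \<Rightarrow> nat" where
  "column_coloring c i i' j = c {(i, j), (i', j)}"

lemma alternating_rectangle_commute:
  "alternating_rectangle c i' i j j' \<longleftrightarrow> alternating_rectangle c i i' j j'"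
  unfolding alternating_rectangle_def by (auto simp: insert_commute)

lemma alternating_rectangle_iff:
  "alternating_rectangle c i i' j j' \<longleftrightarrow>
     column_coloring c i i' j = column_coloring c i i' j' \<and>
     row_coloring c i {j, j'} = row_coloring c i' {j, j'}"
  unfolding alternating_rectangle_def row_coloring_def column_coloring_def by simp

lemma no_alternating_rectangle_iff_proper_column_coloring:
  "(\<forall>j j'. j < j' \<longrightarrow> j' < n \<longrightarrow> \<not> alternating_rectangle c i i' j j') \<longleftrightarrow>
     proper_coloring (agreement_edges (row_coloring c i) (row_coloring c i') n)
       (column_coloring c i i')"
  unfolding proper_coloring_agreement_edges_iff alternating_rectangle_iff by blast

lemma edge_coloring_row_coloring:
  assumes "edge_coloring (grid_edges m n) r c" and "i < m"
  shows "edge_coloring (complete_edges n) r (row_coloring c i)"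
  unfolding edge_coloring_def
proof
  fix e assume "e \<in> complete_edges n"
  moreover then obtain j j' where "e = {j, j'}" unfolding complete_edges_def by blast
  ultimately show "row_coloring c i e < r"
    using assms grid_edges_row unfolding edge_coloring_def row_coloring_def by auto
qed

lemma colorable_agreement_graph_of_rows:
  assumes "edge_coloring (grid_edges m n) r c"
    and "\<forall>j j'. j < j' \<longrightarrow> j' < n \<longrightarrow> \<not> alternating_rectangle c i i' j j'"
    and "i < m" "i' < m" "i \<noteq> i'"
  shows "colorable {0..<n} (agreement_edges (row_coloring c i) (row_coloring c i') n) r"
  unfolding colorable_iff_proper_coloring
proof (intro exI conjI)
  show "\<forall>j\<in>{0..<n}. column_coloring c i i' j < r"
    using assms(1,3-) grid_edges_column unfolding edge_coloring_def column_coloring_def by auto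
  show "proper_coloring (agreement_edges (row_coloring c i) (row_coloring c i') n)
          (column_coloring c i i')"
    using assms(2) no_alternating_rectangle_iff_proper_column_coloring by blast
qed

text \<open>Row edges and column edges are told apart by the number of rows they meet.\<close>

definition grid_coloring ::
    "(nat \<Rightarrow> nat set \<Rightarrow> nat) \<Rightarrow> (nat \<Rightarrow> nat \<Rightarrow> nat \<Rightarrow> nat) \<Rightarrow> (nat \<times> nat) set \<Rightarrow> nat" where
  "grid_coloring cs F e =
     (if card (fst ` e) = 1 then cs (the_elem (fst ` e)) (snd ` e)
      else F (Min (fst ` e)) (Max (fst ` e)) (the_elem (snd ` e)))"

lemma grid_coloring_row: "grid_coloring cs F {(i, j), (i, j')} = cs i {j, j'}"
  unfolding grid_coloring_def by simp

lemma grid_coloring_column: "i < i' \<Longrightarrow> grid_coloring cs F {(i, j), (i', j)} = F i i' j"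
  unfolding grid_coloring_def by simp

lemma edge_coloring_grid_coloring:
  assumes "\<forall>i<m. edge_coloring (complete_edges n) r (cs i)"
    and "\<forall>i i' j. i < i' \<longrightarrow> i' < m \<longrightarrow> j < n \<longrightarrow> F i i' j < r"
  shows "edge_coloring (grid_edges m n) r (grid_coloring cs F)"
  unfolding edge_coloring_def
proof
  fix e assume "e \<in> grid_edges m n"
  then show "grid_coloring cs F e < r"
  proof (cases rule: grid_edgesE)
    case row
    then show ?thesis using assms(1) by (auto simp: grid_coloring_row edge_coloring_def)
  next
    case column
    then show ?thesis using assms(2) by (simp add: grid_coloring_column)
  qed
qed

lemma grid_coloring_no_alternating_rectangle:
  assumes "proper_coloring (agreement_edges (cs i) (cs i') n) (F i i')"
    and "i < i'" "j < j'" "j' < n"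
  shows "\<not> alternating_rectangle (grid_coloring cs F) i i' j j'"
  using assms(1)[unfolded proper_coloring_agreement_edges_iff, rule_format, OF assms(3,4)] assms(2)
  unfolding alternating_rectangle_def by (auto simp: grid_coloring_row grid_coloring_column)

theorem lemma3p1:
  fixes m n r :: nat
  assumes "0 < m" and "0 < n" and "0 < r"
  shows "(\<exists>c :: (nat \<times> nat) set \<Rightarrow> nat. edge_coloring (grid_edges m n) r c \<and>
            \<not> (\<exists>i i' j j'. i < i' \<and> i' < m \<and> j < j' \<and> j' < n \<and>
                  alternating_rectangle c i i' j j'))
       \<longleftrightarrow>
         (\<exists>cs :: nat \<Rightarrow> nat set \<Rightarrow> nat.
            (\<forall>i<m. edge_coloring (complete_edges n) r (cs i)) \<and>
            (\<forall>i<m. \<forall>j<m. i \<noteq> j \<longrightarrow>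
                chromatic_number {0..<n} (agreement_edges (cs i) (cs j) n) \<le> r))"
  (is "?grid \<longleftrightarrow> ?rows")
proof
  assume ?grid
  then obtain c where c: "edge_coloring (grid_edges m n) r c"
    and no_rectangle: "\<And>i i' j j'. i < i' \<Longrightarrow> i' < m \<Longrightarrow> j < j' \<Longrightarrow> j' < n \<Longrightarrow>
                         \<not> alternating_rectangle c i i' j j'"
    by blast
  have no_rectangle_either_order: "\<not> alternating_rectangle c i i' j j'"
    if "i < m" "i' < m" "i \<noteq> i'" "j < j'" "j' < n" for i i' j j'
  proof (cases "i < i'")
    case True
    with that no_rectangle show ?thesis by blast
  next
    case False
    with that no_rectangle[of i' i j j'] show ?thesis by (simp add: alternating_rectangle_commute)
  qed
  have "colorable {0..<n} (agreement_edges (row_coloring c i) (row_coloring c i') n) r"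
    if "i < m" "i' < m" "i \<noteq> i'" for i i'
    using c no_rectangle_either_order that by (intro colorable_agreement_graph_of_rows) auto
  with edge_coloring_row_coloring[OF c] show ?rows
    by (intro exI[of _ "row_coloring c"]) (auto simp: chromatic_number_agreement_edges_le_iff)
next
  assume ?rows
  then obtain cs where cs: "\<forall>i<m. edge_coloring (complete_edges n) r (cs i)"
    and colorable: "\<And>i i'. i < m \<Longrightarrow> i' < m \<Longrightarrow> i \<noteq> i' \<Longrightarrow>
                      colorable {0..<n} (agreement_edges (cs i) (cs i') n) r"
    by (auto simp: chromatic_number_agreement_edges_le_iff)
  have "\<exists>f. (\<forall>j\<in>{0..<n}. f j < r) \<and> proper_coloring (agreement_edges (cs i) (cs i') n) f"
    if "i < i'" "i' < m" for i i'
    using colorable[of i i'] that unfolding colorable_iff_proper_coloring by simp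
  then obtain F where F: "\<And>i i'. i < i' \<Longrightarrow> i' < m \<Longrightarrow>
      (\<forall>j\<in>{0..<n}. F i i' j < r) \<and> proper_coloring (agreement_edges (cs i) (cs i') n) (F i i')"
    by metis
  have "edge_coloring (grid_edges m n) r (grid_coloring cs F)"
    using cs F by (intro edge_coloring_grid_coloring) auto
  moreover have "\<not> alternating_rectangle (grid_coloring cs F) i i' j j'"
    if "i < i'" "i' < m" "j < j'" "j' < n" for i i' j j'
    using F[of i i'] that by (intro grid_coloring_no_alternating_rectangle) auto
  ultimately show ?grid by blast
qed

end
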